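(* Let $\kappa>0$, $u_0>0$, and let $u$ be the solution of $\frac{d}{dr}\big(u'/\sqrt{1+u'^2}\big)=\kappa u$, $u(0)=u_0$, $u'(0)=0$. Let $a>0$ and $0\le\gamma<\pi/2$ be such that $u$ is defined on $[0,a)$ and meets the vertical wall $r=a$ with contact angle $\gamma$, i.e. $\sin\psi(a)=\cos\gamma$, where $\sin\psi=u'/\sqrt{1+u'^2}$ (extended continuously to $r=a$). Then $q=u(a)-u(0)$ satisfies $$\frac1{\kappa u_0}\Big(1-\sqrt{1-a^2\kappa^2u_0^2}\Big)<q<\frac a{\cos\gamma}(1-\sin\gamma)$$ and $$q>\frac{2a(1-\sin\gamma)}{1+\sqrt{1+2\kappa a^2(1-\sin\gamma)}}.$$
   Context: $u$ is the profile of a $\kappa$-cylindrical capillary surface $z=u(x)$ between vertical plates $x=\pm a$; $\psi$ denotes the inclination angle of the graph. *)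

theory Defs
  imports Complex_Main
begin

definition sin_incl :: "real \<Rightarrow> real" where
  "sin_incl p = p / sqrt (1 + p\<^sup>2)"

end

theory Submission
  imports Defs "HOL-Analysis.Analysis"
begin

text \<open>
  Write \<open>sin \<psi> = sin_incl u'\<close>. The equation says \<open>(sin \<psi>)' = \<kappa> u\<close>, and
  \<open>cos \<psi> + \<kappa> u\<^sup>2 / 2\<close> is a first integral. Hence \<open>u \<ge> u(0) > 0\<close>, so \<open>sin \<psi>\<close> is
  strictly increasing and strictly convex on \<open>[0, a)\<close>: it lies above \<open>\<kappa> u(0) r\<close> and
  below the chord \<open>(cos \<gamma> / a) r\<close>. The slope \<open>u'\<close> is an increasing function of \<open>sin \<psi>\<close>,
  so \<open>u\<close> rises faster, resp. slower, than the circular arcs whose \<open>sin \<psi>\<close> are these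
  two linear functions; this gives the first two bounds. At the wall the first integral
  reads \<open>1 - sin \<gamma> = \<kappa> q (q + 2 u(0)) / 2\<close>, and with \<open>\<kappa> a u(0) < cos \<gamma> \<le> 1\<close> this
  quadratic relation gives the third bound.
\<close>

section \<open>The sine of the inclination angle\<close>

lemma sin_incl_eq_sin_arctan: "sin_incl p = sin (arctan p)"
  by (simp add: sin_incl_def sin_arctan)

lemma sqrt_one_minus_sin_incl_sq: "sqrt (1 - (sin_incl p)\<^sup>2) = cos (arctan p)"
proof -
  have "1 - (sin_incl p)\<^sup>2 = (cos (arctan p))\<^sup>2"
    by (simp add: sin_incl_eq_sin_arctan cos_squared_eq)
  moreover have "0 < cos (arctan p)"
    using arctan_bounded by (intro cos_gt_zero_pi) auto
  ultimately show ?thesis by simp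
qed

lemma abs_sin_incl_less_one: "\<bar>sin_incl p\<bar> < 1"
proof -
  have "0 < cos (arctan p)"
    using arctan_bounded by (intro cos_gt_zero_pi) auto
  then have "(sin_incl p)\<^sup>2 < 1"
    using sqrt_one_minus_sin_incl_sq[of p] by (metis diff_gt_0_iff_gt real_sqrt_le_0_iff not_le)
  then show ?thesis by (simp add: abs_square_less_1)
qed

lemma slope_eq_sin_incl_div: "p = sin_incl p / sqrt (1 - (sin_incl p)\<^sup>2)"
  unfolding sqrt_one_minus_sin_incl_sq unfolding sin_incl_eq_sin_arctan by (metis tan_arctan tan_def)

lemma sin_incl_less_iff: "sin_incl p < sin_incl q \<longleftrightarrow> p < q"
  unfolding sin_incl_eq_sin_arctan
  using arctan_bounded[of p] arctan_bounded[of q]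
  by (simp add: sin_mono_less_eq arctan_less_iff)

lemma sin_incl_div_sqrt_one_minus_sq: "\<bar>s\<bar> < 1 \<Longrightarrow> sin_incl (s / sqrt (1 - s\<^sup>2)) = s"
  by (simp add: sin_incl_eq_sin_arctan flip: arcsin_arctan)

section \<open>Monotonicity from derivatives\<close>

lemma strict_mono_on_if_deriv_pos:
  fixes f f' :: "real \<Rightarrow> real"
  assumes "is_interval I" "continuous_on I f"
    and "\<And>t. t \<in> interior I \<Longrightarrow> (f has_real_derivative f' t) (at t)"
    and "\<And>t. t \<in> interior I \<Longrightarrow> 0 < f' t"
  shows "strict_mono_on I f"
proof (rule strict_mono_onI)
  fix x y assume xy: "x \<in> I" "y \<in> I" "x < y"
  have sub: "{x..y} \<subseteq> I"
    using mem_is_interval_1_I[OF assms(1) xy(1,2)] by auto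
  then have open_part: "{x<..<y} \<subseteq> interior I"
    using interior_mono[OF sub] by simp
  show "f x < f y"
  proof (rule DERIV_pos_imp_increasing_open[OF xy(3)])
    fix t assume "x < t" "t < y"
    then have "t \<in> interior I"
      using open_part by auto
    then show "\<exists>d. (f has_real_derivative d) (at t) \<and> 0 < d"
      using assms(3,4) by blast
  qed (rule continuous_on_subset[OF assms(2) sub])
qed

lemma strict_mono_on_less_left_limit:
  fixes f :: "real \<Rightarrow> real"
  assumes mono: "strict_mono_on {x..<b} f" and lim: "(f \<longlongrightarrow> L) (at_left b)"
    and r: "x \<le> r" "r < b"
  shows "f r < L"
proof -
  define r' where "r' = (r + b) / 2"
  have r': "r < r'" "r' < b" using r unfolding r'_def by auto
  have "\<forall>\<^sub>F s in at_left b. f r' \<le> f s"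
    using eventually_at_left_real[OF r'(2)]
    by (rule eventually_mono) (use r r' in \<open>auto intro!: less_imp_le[OF strict_mono_onD[OF mono]]\<close>)
  then have "f r' \<le> L"
    using lim by (intro tendsto_lowerbound) auto
  moreover have "f r < f r'"
    using r r' by (intro strict_mono_onD[OF mono]) auto
  ultimately show ?thesis by simp
qed

lemma below_chord_if_deriv_strict_mono:
  fixes f f' :: "real \<Rightarrow> real"
  assumes r: "x < r" "r < b" and cont: "continuous_on {x..<b} f"
    and deriv: "\<And>t. x < t \<Longrightarrow> t < b \<Longrightarrow> (f has_real_derivative f' t) (at t)"
    and mono: "strict_mono_on {x<..<b} f'"
    and lim: "(f \<longlongrightarrow> L) (at_left b)"
  shows "(f r - f x) * (b - x) < (L - f x) * (r - x)"
proof -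
  define g where "g s = f s - f' r * s" for s
  have deriv_g: "(g has_real_derivative f' t - f' r) (at t)" if "x < t" "t < b" for t
    unfolding g_def using deriv[OF that] by (auto intro!: derivative_eq_intros)
  have cont_g: "continuous_on {x..<b} g"
    unfolding g_def using cont by (intro continuous_intros)
  have "strict_mono_on {r..<b} g"
    using r deriv_g strict_mono_onD[OF mono, of r]
    by (intro strict_mono_on_if_deriv_pos[where f' = "\<lambda>t. f' t - f' r"]
          continuous_on_subset[OF cont_g]) auto
  moreover have "(g \<longlongrightarrow> L - f' r * b) (at_left b)"
    unfolding g_def using lim by (intro tendsto_intros)
  ultimately have "g r < L - f' r * b"
    using r by (intro strict_mono_on_less_left_limit[of r b g]) auto
  then have right: "f r - f x < (L - f x) - f' r * (b - r)"
    unfolding g_def by (simp add: right_diff_distrib)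
  have cont_left: "continuous_on {x..r} (\<lambda>s. - g s)"
    using r by (intro continuous_on_minus continuous_on_subset[OF cont_g]) auto
  have deriv_left: "((\<lambda>s. - g s) has_real_derivative f' r - f' t) (at t)" if "t \<in> {x<..<r}" for t
    using deriv_g[of t] that r by (auto intro!: derivative_eq_intros)
  have pos_left: "0 < f' r - f' t" if "t \<in> {x<..<r}" for t
    using that r strict_mono_onD[OF mono, of t r] by simp
  have "strict_mono_on {x..r} (\<lambda>s. - g s)"
    using is_interval_cc cont_left deriv_left pos_left
    by (rule strict_mono_on_if_deriv_pos) simp_all
  then have "- g x < - g r"
    by (rule strict_mono_onD) (use r in auto)
  then have left: "f r - f x < f' r * (r - x)"
    unfolding g_def by (simp add: right_diff_distrib)
  have "(f r - f x) * (b - x) = (f r - f x) * (b - r) + (f r - f x) * (r - x)"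
    by (simp add: right_diff_distrib)
  also have "\<dots> < f' r * (r - x) * (b - r) + ((L - f x) - f' r * (b - r)) * (r - x)"
    using left right r by (intro add_strict_mono mult_strict_right_mono) simp_all
  also have "\<dots> = (L - f x) * (r - x)"
    by (simp add: algebra_simps)
  finally show ?thesis .
qed

section \<open>Comparison with circular arcs\<close>

text \<open>The lower half of the circle of radius \<open>1 / k\<close> with lowest point at the origin.\<close>

definition circ_arc :: "real \<Rightarrow> real \<Rightarrow> real" where
  "circ_arc k t = (1 - sqrt (1 - (k * t)\<^sup>2)) / k"

lemma continuous_on_circ_arc: "continuous_on A (circ_arc k)"
  unfolding circ_arc_def[abs_def] divide_inverse by (intro continuous_intros)

lemma circ_arc_has_real_derivative:
  assumes "k \<noteq> 0" and pos: "0 < 1 - (k * t)\<^sup>2"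
  shows "(circ_arc k has_real_derivative (k * t) / sqrt (1 - (k * t)\<^sup>2)) (at t)"
proof -
  have "((\<lambda>t. k * t) has_real_derivative k * 1) (at t)"
    by (rule DERIV_cmult[OF DERIV_ident])
  from DERIV_diff[OF DERIV_const[of 1] DERIV_power[OF this, of 2]]
  have "((\<lambda>t. 1 - (k * t)\<^sup>2) has_real_derivative - (2 * (k * t) * k)) (at t)"
    by (simp add: mult_ac)
  from DERIV_chain2[OF DERIV_real_sqrt[OF pos] this]
  have "((\<lambda>t. sqrt (1 - (k * t)\<^sup>2)) has_real_derivative
      - (k * t) * k / sqrt (1 - (k * t)\<^sup>2)) (at t)"
    by (simp add: divide_simps mult_ac)
  from DERIV_cdivide[OF DERIV_diff[OF DERIV_const[of 1] this], of k]
  show ?thesis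
    using \<open>k \<noteq> 0\<close> unfolding circ_arc_def[abs_def] by simp
qed

lemma circ_arc_sin_incl:
  assumes "k \<noteq> 0" "\<bar>k * t\<bar> < 1"
  shows "\<exists>p. (circ_arc k has_real_derivative p) (at t) \<and> sin_incl p = k * t"
proof (intro exI conjI)
  have "0 < 1 - (k * t)\<^sup>2"
    using assms(2) by (simp add: abs_square_less_1)
  with assms(1) show "(circ_arc k has_real_derivative (k * t) / sqrt (1 - (k * t)\<^sup>2)) (at t)"
    by (rule circ_arc_has_real_derivative)
  show "sin_incl ((k * t) / sqrt (1 - (k * t)\<^sup>2)) = k * t"
    using assms(2) by (rule sin_incl_div_sqrt_one_minus_sq)
qed

lemma circ_arc_less_height_gain:
  fixes u du :: "real \<Rightarrow> real"
  assumes "0 < a" "0 < k" "continuous_on {0..a} u"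
    and deriv: "\<And>t. 0 < t \<Longrightarrow> t < a \<Longrightarrow> (u has_real_derivative du t) (at t)"
    and steeper: "\<And>t. 0 < t \<Longrightarrow> t < a \<Longrightarrow> k * t < sin_incl (du t)"
  shows "circ_arc k a < u a - u 0"
proof -
  have "u 0 - circ_arc k 0 < u a - circ_arc k a"
  proof (rule DERIV_pos_imp_increasing_open[where f = "\<lambda>t. u t - circ_arc k t"])
    fix t assume t: "0 < t" "t < a"
    have "0 < k * t" "k * t < 1"
      using steeper[OF t] abs_sin_incl_less_one[of "du t"] \<open>0 < k\<close> t by auto
    then obtain p where p: "(circ_arc k has_real_derivative p) (at t)" "sin_incl p = k * t"
      using circ_arc_sin_incl[of k t] \<open>0 < k\<close> by auto
    have "p < du t"
      using steeper[OF t] p(2) sin_incl_less_iff[of p "du t"] by simp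
    then show "\<exists>y. ((\<lambda>t. u t - circ_arc k t) has_real_derivative y) (at t) \<and> 0 < y"
      using DERIV_diff[OF deriv[OF t] p(1)] by auto
  qed (use assms in \<open>auto intro!: continuous_on_diff continuous_on_circ_arc\<close>)
  then show ?thesis
    by (simp add: circ_arc_def)
qed

lemma height_gain_less_circ_arc:
  fixes u du :: "real \<Rightarrow> real"
  assumes "0 < a" "0 < k" "k * a \<le> 1" "continuous_on {0..a} u"
    and deriv: "\<And>t. 0 < t \<Longrightarrow> t < a \<Longrightarrow> (u has_real_derivative du t) (at t)"
    and flatter: "\<And>t. 0 < t \<Longrightarrow> t < a \<Longrightarrow> sin_incl (du t) < k * t"
  shows "u a - u 0 < circ_arc k a"
proof -
  have "circ_arc k 0 - u 0 < circ_arc k a - u a"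
  proof (rule DERIV_pos_imp_increasing_open[where f = "\<lambda>t. circ_arc k t - u t"])
    fix t assume t: "0 < t" "t < a"
    have "k * t < k * a"
      using t \<open>0 < k\<close> by simp
    then have "k * t < 1"
      using \<open>k * a \<le> 1\<close> by linarith
    moreover have "0 < k * t"
      using t \<open>0 < k\<close> by simp
    ultimately obtain p where p: "(circ_arc k has_real_derivative p) (at t)" "sin_incl p = k * t"
      using circ_arc_sin_incl[of k t] \<open>0 < k\<close> by auto
    have "du t < p"
      using flatter[OF t] p(2) sin_incl_less_iff[of "du t" p] by simp
    then show "\<exists>y. ((\<lambda>t. circ_arc k t - u t) has_real_derivative y) (at t) \<and> 0 < y"
      using DERIV_diff[OF p(1) deriv[OF t]] by auto
  qed (use assms in \<open>auto intro!: continuous_on_diff continuous_on_circ_arc\<close>)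
  then show ?thesis
    by (simp add: circ_arc_def)
qed

section \<open>The capillary profile\<close>

text \<open>
  With \<open>R = sqrt (1 + 2 \<kappa> a\<^sup>2 B)\<close> the left side is \<open>(R - 1) / (\<kappa> a)\<close>, and \<open>R < 1 + \<kappa> a q\<close>
  becomes \<open>\<kappa> a u\<^sub>0 < 1\<close> after squaring.
\<close>

lemma quadratic_gain_bound:
  fixes \<kappa> a q u\<^sub>0 B :: real
  assumes "0 < \<kappa>" "0 < a" "0 < q" "0 \<le> u\<^sub>0" "\<kappa> * a * u\<^sub>0 < 1"
    and B: "2 * B = \<kappa> * q * (q + 2 * u\<^sub>0)"
  shows "2 * a * B / (1 + sqrt (1 + 2 * \<kappa> * a\<^sup>2 * B)) < q"
proof -
  define R where "R = sqrt (1 + 2 * \<kappa> * a\<^sup>2 * B)"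
  have "0 \<le> \<kappa> * q * (q + 2 * u\<^sub>0)"
    using assms by simp
  then have "0 \<le> B"
    using B by linarith
  then have R_sq: "R\<^sup>2 = 1 + 2 * \<kappa> * a\<^sup>2 * B" and "0 \<le> R"
    unfolding R_def using assms by simp_all
  have "2 * \<kappa> * a\<^sup>2 * B = \<kappa> * a\<^sup>2 * (\<kappa> * q * (q + 2 * u\<^sub>0))"
    using B by simp
  also have "\<dots> = (\<kappa> * a * q)\<^sup>2 + 2 * (\<kappa> * a * q) * (\<kappa> * a * u\<^sub>0)"
    by (simp add: power2_eq_square algebra_simps)
  also have "\<dots> < (\<kappa> * a * q)\<^sup>2 + 2 * (\<kappa> * a * q) * 1"
    using assms by (intro add_strict_left_mono mult_strict_left_mono) auto
  finally have "1 + 2 * \<kappa> * a\<^sup>2 * B < (1 + \<kappa> * a * q)\<^sup>2"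
    by (simp add: power2_eq_square algebra_simps)
  then have "R < sqrt ((1 + \<kappa> * a * q)\<^sup>2)"
    unfolding R_def by (rule real_sqrt_less_mono)
  then have "R < 1 + \<kappa> * a * q"
    using assms by simp
  then have "(R - 1) * (R + 1) < \<kappa> * a * q * (R + 1)"
    using \<open>0 \<le> R\<close> by (intro mult_strict_right_mono) auto
  then have "\<kappa> * a * (2 * a * B) < \<kappa> * a * (q * (1 + R))"
    using R_sq by (simp add: power2_eq_square algebra_simps)
  then have "2 * a * B < q * (1 + R)"
    using assms by simp
  then show ?thesis
    unfolding R_def[symmetric] using \<open>0 \<le> R\<close> by (simp add: divide_less_eq)
qed

locale capillary_profile =
  fixes u du :: "real \<Rightarrow> real" and \<kappa> a c :: real
  assumes kappa_pos: "0 < \<kappa>" and a_pos: "0 < a"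
    and u0_pos: "0 < u 0" and du0: "du 0 = 0"
    and deriv_u: "\<And>r. r \<in> {0..<a} \<Longrightarrow> (u has_real_derivative du r) (at r within {0..<a})"
    and ode: "\<And>r. r \<in> {0..<a} \<Longrightarrow>
      ((\<lambda>s. sin_incl (du s)) has_real_derivative \<kappa> * u r) (at r within {0..<a})"
    and cont: "continuous_on {0..a} u"
    and contact: "((\<lambda>s. sin_incl (du s)) \<longlongrightarrow> c) (at_left a)"
begin

abbreviation sin_psi :: "real \<Rightarrow> real" where
  "sin_psi r \<equiv> sin_incl (du r)"

lemma sin_psi_0: "sin_psi 0 = 0"
  using du0 by (simp add: sin_incl_def)

lemma deriv_u_at: "0 < r \<Longrightarrow> r < a \<Longrightarrow> (u has_real_derivative du r) (at r)"
  using deriv_u[of r] at_within_interior[of r "{0..<a}"] by simp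

lemma ode_at: "0 < r \<Longrightarrow> r < a \<Longrightarrow> (sin_psi has_real_derivative \<kappa> * u r) (at r)"
  using ode[of r] at_within_interior[of r "{0..<a}"] by simp

lemma continuous_on_sin_psi: "continuous_on {0..<a} sin_psi"
  using ode by (rule DERIV_continuous_on)

lemma energy_has_derivative_zero:
  assumes r: "r \<in> {0..<a}"
  shows "((\<lambda>r. sqrt (1 - (sin_psi r)\<^sup>2) + \<kappa> / 2 * (u r)\<^sup>2) has_real_derivative 0)
    (at r within {0..<a})"
proof -
  have pos: "0 < 1 - (sin_psi r)\<^sup>2"
    using abs_sin_incl_less_one[of "du r"] by (simp add: abs_square_less_1)
  from DERIV_diff[OF DERIV_const[of 1] DERIV_power[OF ode[OF r], of 2]]
  have "((\<lambda>r. 1 - (sin_psi r)\<^sup>2) has_real_derivative - (2 * sin_psi r * (\<kappa> * u r)))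
      (at r within {0..<a})"
    by (simp add: mult_ac)
  from DERIV_chain2[OF DERIV_real_sqrt[OF pos] this]
  have cos_psi: "((\<lambda>r. sqrt (1 - (sin_psi r)\<^sup>2)) has_real_derivative
      - (\<kappa> * u r * (sin_psi r / sqrt (1 - (sin_psi r)\<^sup>2)))) (at r within {0..<a})"
    by (simp add: divide_simps mult_ac)
  from DERIV_cmult[OF DERIV_power[OF deriv_u[OF r], of 2], of "\<kappa> / 2"]
  have "((\<lambda>r. \<kappa> / 2 * (u r)\<^sup>2) has_real_derivative \<kappa> * u r * du r) (at r within {0..<a})"
    by (simp add: mult_ac)
  from DERIV_add[OF cos_psi this] show ?thesis
    by (simp flip: slope_eq_sin_incl_div)
qed

lemma energy_conservation:
  assumes "r \<in> {0..<a}"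
  shows "sqrt (1 - (sin_psi r)\<^sup>2) + \<kappa> / 2 * (u r)\<^sup>2 = 1 + \<kappa> / 2 * (u 0)\<^sup>2"
proof -
  have "convex {0..<a}"
    by simp
  then obtain C where "\<forall>r\<in>{0..<a}. sqrt (1 - (sin_psi r)\<^sup>2) + \<kappa> / 2 * (u r)\<^sup>2 = C"
    using has_field_derivative_zero_constant energy_has_derivative_zero by blast
  then show ?thesis
    using assms a_pos sin_psi_0 by force
qed

lemma u_ge_u0:
  assumes r: "r \<in> {0..<a}"
  shows "u 0 \<le> u r"
proof -
  have sq: "(u 0)\<^sup>2 \<le> (u s)\<^sup>2" if "s \<in> {0..<a}" for s
  proof -
    have "sqrt (1 - (sin_psi s)\<^sup>2) \<le> 1"
      by simp
    then have "\<kappa> / 2 * (u 0)\<^sup>2 \<le> \<kappa> / 2 * (u s)\<^sup>2"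
      using energy_conservation[OF that] by linarith
    then show ?thesis
      using kappa_pos by simp
  qed
  have "0 < u r"
  proof (rule ccontr)
    assume "\<not> 0 < u r"
    moreover have "continuous_on {0..r} u"
      using r by (intro continuous_on_subset[OF cont]) auto
    ultimately obtain x where "0 \<le> x" "x \<le> r" "u x = 0"
      using IVT2'[of u r 0 0] u0_pos r by auto
    then show False
      using sq[of x] r u0_pos by simp
  qed
  then show ?thesis
    using power2_le_imp_le[OF sq[OF r]] by simp
qed

lemma sin_psi_strict_mono: "strict_mono_on {0..<a} sin_psi"
proof (rule strict_mono_on_if_deriv_pos[where f' = "\<lambda>t. \<kappa> * u t"])
  fix t assume "t \<in> interior {0..<a}"
  then have t: "0 < t" "t < a"
    by simp_all
  then show "(sin_psi has_real_derivative \<kappa> * u t) (at t)"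
    by (rule ode_at)
  have "0 < u t"
    using u_ge_u0[of t] u0_pos t by force
  then show "0 < \<kappa> * u t"
    using kappa_pos by simp
qed (simp_all add: continuous_on_sin_psi)

lemma sin_psi_pos: "0 < r \<Longrightarrow> r < a \<Longrightarrow> 0 < sin_psi r"
  using strict_mono_onD[OF sin_psi_strict_mono, of 0 r] sin_psi_0 by simp

lemma u_strict_mono: "strict_mono_on {0..a} u"
proof (rule strict_mono_on_if_deriv_pos[where f' = du])
  fix t assume "t \<in> interior {0..a}"
  then have t: "0 < t" "t < a"
    by simp_all
  then show "(u has_real_derivative du t) (at t)"
    by (rule deriv_u_at)
  have "sin_incl 0 < sin_incl (du t)"
    using sin_psi_pos[OF t] by (simp add: sin_incl_def)
  then show "0 < du t"
    by (simp only: sin_incl_less_iff)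
qed (simp_all add: cont)

lemma sin_psi_minus_linear_strict_mono: "strict_mono_on {0..<a} (\<lambda>s. sin_psi s - \<kappa> * u 0 * s)"
proof (rule strict_mono_on_if_deriv_pos[where f' = "\<lambda>t. \<kappa> * u t - \<kappa> * u 0"])
  show "continuous_on {0..<a} (\<lambda>s. sin_psi s - \<kappa> * u 0 * s)"
    by (intro continuous_on_diff continuous_on_sin_psi continuous_intros)
  fix t assume "t \<in> interior {0..<a}"
  then have t: "0 < t" "t < a"
    by simp_all
  show "((\<lambda>s. sin_psi s - \<kappa> * u 0 * s) has_real_derivative \<kappa> * u t - \<kappa> * u 0) (at t)"
    using DERIV_diff[OF ode_at[OF t] DERIV_cmult[OF DERIV_ident, of "\<kappa> * u 0"]] by simp
  have "u 0 < u t"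
    using strict_mono_onD[OF u_strict_mono, of 0 t] t by simp
  then show "0 < \<kappa> * u t - \<kappa> * u 0"
    using kappa_pos by simp
qed simp

lemma sin_psi_gt_linear: "0 < r \<Longrightarrow> r < a \<Longrightarrow> \<kappa> * u 0 * r < sin_psi r"
  using strict_mono_onD[OF sin_psi_minus_linear_strict_mono, of 0 r] sin_psi_0 by simp

lemma kappa_u0_a_less_contact: "\<kappa> * u 0 * a < c"
proof -
  have "((\<lambda>s. sin_psi s - \<kappa> * u 0 * s) \<longlongrightarrow> c - \<kappa> * u 0 * a) (at_left a)"
    using contact by (intro tendsto_intros)
  then have "sin_psi 0 - \<kappa> * u 0 * 0 < c - \<kappa> * u 0 * a"
    using a_pos by (intro strict_mono_on_less_left_limit[OF sin_psi_minus_linear_strict_mono]) auto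
  then show ?thesis
    by (simp add: sin_psi_0)
qed

lemma contact_le_one: "c \<le> 1"
proof (rule tendsto_upperbound[OF contact])
  show "\<forall>\<^sub>F s in at_left a. sin_psi s \<le> 1"
    using abs_sin_incl_less_one by (simp add: abs_less_iff less_imp_le)
qed simp

lemma sin_psi_below_chord:
  assumes r: "0 < r" "r < a"
  shows "sin_psi r < c / a * r"
proof -
  have "strict_mono_on {0<..<a} (\<lambda>t. \<kappa> * u t)"
  proof (rule strict_mono_onI)
    fix s t assume "s \<in> {0<..<a}" "t \<in> {0<..<a}" "s < t"
    then show "\<kappa> * u s < \<kappa> * u t"
      using strict_mono_onD[OF u_strict_mono, of s t] kappa_pos by simp
  qed
  then have "(sin_psi r - sin_psi 0) * (a - 0) < (c - sin_psi 0) * (r - 0)"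
    using r continuous_on_sin_psi ode_at contact by (intro below_chord_if_deriv_strict_mono) auto
  then show ?thesis
    using a_pos by (simp add: sin_psi_0 field_simps)
qed

lemma u_tendsto_at_left: "(u \<longlongrightarrow> u a) (at_left a)"
  using cont a_pos unfolding continuous_on_def
  by (metis atLeastAtMost_iff at_within_Icc_at_left less_eq_real_def order_refl)

lemma energy_at_contact: "sqrt (1 - c\<^sup>2) + \<kappa> / 2 * (u a)\<^sup>2 = 1 + \<kappa> / 2 * (u 0)\<^sup>2"
proof (rule tendsto_unique[OF trivial_limit_at_left_real])
  show "((\<lambda>r. sqrt (1 - (sin_psi r)\<^sup>2) + \<kappa> / 2 * (u r)\<^sup>2) \<longlongrightarrow>
      sqrt (1 - c\<^sup>2) + \<kappa> / 2 * (u a)\<^sup>2) (at_left a)"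
    using contact u_tendsto_at_left by (intro tendsto_intros)
  have "\<forall>\<^sub>F r in at_left a. 1 + \<kappa> / 2 * (u 0)\<^sup>2 = sqrt (1 - (sin_psi r)\<^sup>2) + \<kappa> / 2 * (u r)\<^sup>2"
    using eventually_at_left_real[OF a_pos]
    by (rule eventually_mono) (intro energy_conservation[symmetric], simp)
  then show "((\<lambda>r. sqrt (1 - (sin_psi r)\<^sup>2) + \<kappa> / 2 * (u r)\<^sup>2) \<longlongrightarrow>
      1 + \<kappa> / 2 * (u 0)\<^sup>2) (at_left a)"
    by (rule Lim_transform_eventually[OF tendsto_const])
qed

lemma height_gain_lower_bound: "circ_arc (\<kappa> * u 0) a < u a - u 0"
  using a_pos kappa_pos u0_pos cont deriv_u_at sin_psi_gt_linear
  by (intro circ_arc_less_height_gain) auto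

lemma height_gain_upper_bound: "u a - u 0 < circ_arc (c / a) a"
proof (rule height_gain_less_circ_arc[OF a_pos])
  have "0 < \<kappa> * u 0 * a"
    using kappa_pos u0_pos a_pos by simp
  then have "0 < c"
    using kappa_u0_a_less_contact by linarith
  then show "0 < c / a"
    using a_pos by simp
  show "c / a * a \<le> 1"
    using a_pos contact_le_one by simp
qed (use cont deriv_u_at sin_psi_below_chord in auto)

lemma height_gain_energy_bound:
  "2 * a * (1 - sqrt (1 - c\<^sup>2)) / (1 + sqrt (1 + 2 * \<kappa> * a\<^sup>2 * (1 - sqrt (1 - c\<^sup>2))))
    < u a - u 0"
proof (rule quadratic_gain_bound[OF kappa_pos a_pos])
  show "0 < u a - u 0"
    using strict_mono_onD[OF u_strict_mono, of 0 a] a_pos by simp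
  show "0 \<le> u 0"
    using u0_pos by simp
  show "\<kappa> * a * u 0 < 1"
    using kappa_u0_a_less_contact contact_le_one by (simp add: mult_ac)
  have "2 * (1 - sqrt (1 - c\<^sup>2)) = \<kappa> * ((u a)\<^sup>2 - (u 0)\<^sup>2)"
    using energy_at_contact by (simp add: algebra_simps)
  also have "\<dots> = \<kappa> * (u a - u 0) * (u a - u 0 + 2 * u 0)"
    by (simp add: power2_eq_square algebra_simps)
  finally show "2 * (1 - sqrt (1 - c\<^sup>2)) = \<kappa> * (u a - u 0) * (u a - u 0 + 2 * u 0)" .
qed

end

theorem mainTheorem9:
  fixes u du :: "real \<Rightarrow> real" and \<kappa> u\<^sub>0 a \<gamma> :: real
  assumes kpos: "\<kappa> > 0" and u0pos: "u\<^sub>0 > 0"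
    and apos: "a > 0" and gam: "0 \<le> \<gamma>" "\<gamma> < pi / 2"
    and init: "u 0 = u\<^sub>0" "du 0 = 0"
    and deriv_u: "\<And>r. r \<in> {0..<a} \<Longrightarrow> (u has_real_derivative du r) (at r within {0..<a})"
    and ode: "\<And>r. r \<in> {0..<a} \<Longrightarrow>
               ((\<lambda>s. sin_incl (du s)) has_real_derivative \<kappa> * u r) (at r within {0..<a})"
    and cont: "continuous_on {0..a} u"
    and contact: "((\<lambda>s. sin_incl (du s)) \<longlongrightarrow> cos \<gamma>) (at_left a)"
  shows "(1 / (\<kappa> * u\<^sub>0)) * (1 - sqrt (1 - a\<^sup>2 * \<kappa>\<^sup>2 * u\<^sub>0\<^sup>2)) < u a - u 0
       \<and> u a - u 0 < (a / cos \<gamma>) * (1 - sin \<gamma>)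
       \<and> u a - u 0 > 2 * a * (1 - sin \<gamma>) / (1 + sqrt (1 + 2 * \<kappa> * a\<^sup>2 * (1 - sin \<gamma>)))"
proof -
  interpret capillary_profile u du \<kappa> a "cos \<gamma>"
    using kpos apos u0pos init deriv_u ode cont contact by unfold_locales auto
  have "0 \<le> sin \<gamma>"
    using gam by (intro sin_ge_zero) auto
  then have sin_\<gamma>: "sqrt (1 - (cos \<gamma>)\<^sup>2) = sin \<gamma>"
    by (simp add: sin_squared_eq[symmetric])
  have "circ_arc (\<kappa> * u\<^sub>0) a = (1 / (\<kappa> * u\<^sub>0)) * (1 - sqrt (1 - a\<^sup>2 * \<kappa>\<^sup>2 * u\<^sub>0\<^sup>2))"
    unfolding circ_arc_def by (simp add: power_mult_distrib mult_ac)
  moreover have "circ_arc (cos \<gamma> / a) a = (a / cos \<gamma>) * (1 - sin \<gamma>)"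
    unfolding circ_arc_def using apos sin_\<gamma> by simp
  ultimately show ?thesis
    using height_gain_lower_bound height_gain_upper_bound
      height_gain_energy_bound init sin_\<gamma> by simp
qed

end
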